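(* For each $T\in\mathbb{N}$ let $\mathcal{F}^T_t:=\sigma(Z^T_1(r),\dots,Z^T_m(r):0\le r\le t)$, $t\in[0,T]$, and let $N_T$ be an $\{\mathcal{F}^T_t\}$-adapted non-homogeneous Poisson process with intensity $\lambda_T(t):=\lambda(t/T)$, where $\lambda:[0,1]\to\mathbb{R}_{>0}$ is deterministic and Hölder-continuous of order $\beta>0$ (similarly $\varsigma_T(t)=T^{-1/2}\varsigma(t/T)$ with $\varsigma:[0,1]\to\mathbb{R}_{>0}$ deterministic Hölder-continuous, and log-price $dP_T(t)=\varsigma_T(t)dB(N_T(t))$ with $B$ a Brownian motion independent of $N_T$, $B(N_T(t))$ adapted). Fix an integer $\overline{N}\ge1$ and define $\tau^{\mathrm{rTTS}}_j:=\inf\{t\le T:N_T(t)\ge j\overline{N}\}$ for integers $0\le j\le N_T(T)/\overline{N}$, with $M(T)=\lceil N_T(T)/\overline{N}\rceil$ and $\tau^{\mathrm{rTTS}}_{M(T)}=T$. Then for all constants $\zeta,\eta>0$, $$\mathbb{E}\Big[\frac{\max_j(\tau^{\mathrm{rTTS}}_j-\tau^{\mathrm{rTTS}}_{j-1})^\zeta}{T^\eta}\Big]\to0\quad(T\to\infty),$$ and in particular the sequence $\max_j(\tau^{\mathrm{rTTS}}_j-\tau^{\mathrm{rTTS}}_{j-1})^\zeta/T^\eta$ is uniformly integrable.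
   Context: Hölder-continuity of order $\beta$ means $|\lambda(t+\delta)-\lambda(t)|\le C\delta^\beta$ for all $0\le t\le t+\delta\le1$ and some constant $C>0$. The maximum is taken over $j\in\{1,\dots,M(T)\}$. *)

theory Defs
  imports "HOL-Probability.Probability"
begin

definition holder_cont_01 :: "(real \<Rightarrow> real) \<Rightarrow> real \<Rightarrow> bool" where
  "holder_cont_01 f \<beta> \<longleftrightarrow>
     (\<exists>C>0. \<forall>t \<delta>. 0 \<le> t \<and> 0 \<le> \<delta> \<and> t + \<delta> \<le> 1 \<longrightarrow> \<bar>f (t + \<delta>) - f t\<bar> \<le> C * \<delta> powr \<beta>)"

definition nh_poisson_process ::
    "'a measure \<Rightarrow> real \<Rightarrow> (real \<Rightarrow> real) \<Rightarrow> (real \<Rightarrow> 'a \<Rightarrow> nat) \<Rightarrow> bool" where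
  "nh_poisson_process M T lam N \<longleftrightarrow>
     prob_space M \<and>
     (\<forall>t\<in>{0..T}. N t \<in> measurable M (count_space UNIV)) \<and>
     (\<forall>\<omega>\<in>space M.
        N 0 \<omega> = 0 \<and>
        mono_on {0..T} (\<lambda>t. N t \<omega>) \<and>
        (\<forall>t\<in>{0..<T}. continuous (at_right t) (\<lambda>s. real (N s \<omega>))) \<and>
        (\<forall>t\<in>{0<..T}. \<exists>\<epsilon>>0. \<forall>s\<in>{t - \<epsilon><..<t}. N t \<omega> \<le> N s \<omega> + 1)) \<and>
     (\<forall>(n::nat) (t::nat \<Rightarrow> real).
        (\<forall>i\<le>n. t i \<in> {0..T}) \<and> (\<forall>i<n. t i \<le> t (Suc i)) \<longrightarrow>
        prob_space.indep_vars M (\<lambda>_. count_space UNIV)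
          (\<lambda>i \<omega>. N (t (Suc i)) \<omega> - N (t i) \<omega>) {..<n}) \<and>
     (\<forall>s t (k::nat). 0 \<le> s \<and> s \<le> t \<and> t \<le> T \<longrightarrow>
        measure M {\<omega> \<in> space M. N t \<omega> - N s \<omega> = k} =
          exp (- integral {s..t} lam) * (integral {s..t} lam) ^ k / fact k)"

text \<open>Number of refresh-time sampling intervals M(T) = ceil(N_T(T)/Nbar)
  (taken to be at least 1, so that for N_T(T) = 0 the single interval [0,T] is used).\<close>
definition rtts_count :: "nat \<Rightarrow> real \<Rightarrow> (real \<Rightarrow> nat) \<Rightarrow> nat" where
  "rtts_count Nbar T cnt = max 1 (nat \<lceil>real (cnt T) / real Nbar\<rceil>)"

definition rtts_tau :: "nat \<Rightarrow> real \<Rightarrow> (real \<Rightarrow> nat) \<Rightarrow> nat \<Rightarrow> real" where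
  "rtts_tau Nbar T cnt j =
     (if rtts_count Nbar T cnt \<le> j then T
      else Inf {t \<in> {0..T}. j * Nbar \<le> cnt t})"

definition rtts_max_spacing :: "nat \<Rightarrow> real \<Rightarrow> (real \<Rightarrow> nat) \<Rightarrow> real" where
  "rtts_max_spacing Nbar T cnt =
     Max ((\<lambda>j. rtts_tau Nbar T cnt j - rtts_tau Nbar T cnt (j - 1)) ` {1..rtts_count Nbar T cnt})"

definition unif_integrable_on :: "'i set \<Rightarrow> ('i \<Rightarrow> 'a measure) \<Rightarrow> ('i \<Rightarrow> 'a \<Rightarrow> real) \<Rightarrow> bool" where
  "unif_integrable_on I M X \<longleftrightarrow>
     (\<forall>n\<in>I. integrable (M n) (X n)) \<and>
     (\<forall>\<epsilon>>0. \<exists>K. \<forall>n\<in>I.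
        (\<integral>\<omega>. \<bar>X n \<omega>\<bar> * indicator {\<omega>. K < \<bar>X n \<omega>\<bar>} \<omega> \<partial>M n) \<le> \<epsilon>)"

end

theory Submission
  imports Defs "HOL-Real_Asymp.Real_Asymp"
begin

text \<open>If some spacing \<open>\<tau>\<^sub>j - \<tau>\<^sub>j\<^sub>-\<^sub>1\<close> exceeds \<open>2 h\<close>, it contains a whole grid cell
  \<open>[k h, (k + 1) h] \<subseteq> [0, T]\<close> on which the counting path increases by at most \<open>Nbar\<close>.
  The intensity is bounded below by some \<open>c > 0\<close>, so each of the at most \<open>T / h\<close> cell increments
  is Poisson with mean at least \<open>c h\<close>, and a union bound gives
  \<open>P(max spacing > 2 h) = O(T / h * exp (- c h / 2))\<close>. Since the maximal spacing never exceeds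
  \<open>T\<close>, its \<open>\<zeta>\<close>-th moment is at most \<open>(2 h) powr \<zeta> + T powr \<zeta> * O(T / h * exp (- c h / 2))\<close>,
  and \<open>h = T powr (\<eta> / (2 \<zeta>))\<close> makes this \<open>o(T powr \<eta>)\<close>. Uniform integrability follows
  because each variable is bounded and their expectations tend to \<open>0\<close>.\<close>

section \<open>Refresh-time sampling of a counting path\<close>

lemma mult_le_of_less_rtts_count:
  assumes "j < rtts_count Nbar T f"
  shows "j * Nbar \<le> f T"
proof (cases "j = 0 \<or> Nbar = 0")
  case False
  then have "j < nat \<lceil>real (f T) / real Nbar\<rceil>"
    using assms by (auto simp: rtts_count_def less_max_iff_disj)
  then have "int j < \<lceil>real (f T) / real Nbar\<rceil>"
    by linarith
  then have "real j < real (f T) / real Nbar"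
    by (metis less_ceiling_iff of_int_of_nat_eq)
  then have "real (j * Nbar) < real (f T)"
    using False by (simp add: field_simps)
  then show ?thesis by linarith
next
  case True
  then show ?thesis using assms by (auto simp: rtts_count_def)
qed

lemma le_rtts_count_mult:
  assumes "Nbar \<ge> 1"
  shows "f T \<le> rtts_count Nbar T f * Nbar"
proof -
  have "real (f T) / real Nbar \<le> real (rtts_count Nbar T f)"
    unfolding rtts_count_def by linarith
  then have "real (f T) \<le> real (rtts_count Nbar T f * Nbar)"
    using assms by (simp add: field_simps)
  then show ?thesis by linarith
qed

lemma rtts_tau_bounds:
  assumes "T \<ge> 0"
  shows "0 \<le> rtts_tau Nbar T f j" "rtts_tau Nbar T f j \<le> T"
proof -
  let ?S = "{t \<in> {0..T}. j * Nbar \<le> f t}"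
  have "0 \<le> Inf ?S \<and> Inf ?S \<le> T" if "j < rtts_count Nbar T f"
  proof
    have S: "T \<in> ?S" using mult_le_of_less_rtts_count[OF that] assms by simp
    then show "0 \<le> Inf ?S" by (intro cInf_greatest) auto
    show "Inf ?S \<le> T" using S by (intro cInf_lower) auto
  qed
  then show "0 \<le> rtts_tau Nbar T f j" "rtts_tau Nbar T f j \<le> T"
    using assms by (auto simp: rtts_tau_def)
qed

lemma less_mult_if_less_rtts_tau:
  assumes "T \<ge> 0" "j < rtts_count Nbar T f" "0 \<le> v" "v < rtts_tau Nbar T f j"
  shows "f v < j * Nbar"
proof (rule ccontr)
  let ?S = "{t \<in> {0..T}. j * Nbar \<le> f t}"
  assume "\<not> f v < j * Nbar"
  moreover have "v \<le> T" using rtts_tau_bounds(2)[OF assms(1), of Nbar f j] assms(4) by linarith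
  ultimately have "v \<in> ?S" using assms by auto
  moreover have "bdd_below ?S" by (rule bdd_belowI[of _ 0]) auto
  ultimately have "Inf ?S \<le> v" by (rule cInf_lower)
  then show False using assms by (simp add: rtts_tau_def)
qed

lemma mult_le_if_rtts_tau_less:
  assumes "T \<ge> 0" "j < rtts_count Nbar T f" "mono_on {0..T} f" "u \<le> T" "rtts_tau Nbar T f j < u"
  shows "j * Nbar \<le> f u"
proof -
  let ?S = "{t \<in> {0..T}. j * Nbar \<le> f t}"
  have "T \<in> ?S" using mult_le_of_less_rtts_count[OF assms(2)] assms(1) by simp
  then have "?S \<noteq> {}" by blast
  moreover have "bdd_below ?S" by (rule bdd_belowI[of _ 0]) auto
  moreover have "Inf ?S < u" using assms(2,5) by (simp add: rtts_tau_def)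
  ultimately obtain t where "t \<in> ?S" "t < u" by (subst (asm) cInf_less_iff) blast+
  then show ?thesis using assms(4) mono_onD[OF assms(3), of t u] by auto
qed

lemma rtts_increment_le:
  assumes "Nbar \<ge> 1" "T \<ge> 0" "1 \<le> j" "j \<le> rtts_count Nbar T f" "mono_on {0..T} f"
    and "rtts_tau Nbar T f (j - 1) < u" "u \<le> v" "v < rtts_tau Nbar T f j"
  shows "f v - f u \<le> Nbar"
proof -
  have "0 \<le> rtts_tau Nbar T f (j - 1)" "rtts_tau Nbar T f j \<le> T"
    using rtts_tau_bounds[OF assms(2)] by blast+
  then have u: "0 \<le> u" "u \<le> T" and v: "0 \<le> v" "v \<le> T"
    using assms(6-8) by linarith+
  have "(j - 1) * Nbar \<le> f u"
    using mult_le_if_rtts_tau_less[OF assms(2) _ assms(5) u(2) assms(6)] assms(3,4) by simp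
  moreover have "f v \<le> j * Nbar"
  proof (cases "j < rtts_count Nbar T f")
    case True
    then show ?thesis using less_mult_if_less_rtts_tau[OF assms(2) True v(1) assms(8)] by simp
  next
    case False
    have "f v \<le> f T" using mono_onD[OF assms(5), of v T] v assms(2) by simp
    also have "\<dots> \<le> j * Nbar" using le_rtts_count_mult[OF assms(1)] False assms(4) by simp
    finally show ?thesis .
  qed
  moreover have "j * Nbar = (j - 1) * Nbar + Nbar" using assms(3) by (cases j) auto
  ultimately show ?thesis by linarith
qed

lemma rtts_max_spacing_bounds:
  assumes "T \<ge> 0"
  shows "0 \<le> rtts_max_spacing Nbar T f" "rtts_max_spacing Nbar T f \<le> T"
proof -
  let ?\<tau> = "rtts_tau Nbar T f" and ?M = "rtts_count Nbar T f"
  let ?A = "(\<lambda>j. ?\<tau> j - ?\<tau> (j - 1)) ` {1..?M}"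
  have M: "1 \<le> ?M" by (simp add: rtts_count_def)
  have \<tau>: "0 \<le> ?\<tau> j" "?\<tau> j \<le> T" for j
    using rtts_tau_bounds[OF assms] by auto
  have "?\<tau> ?M - ?\<tau> (?M - 1) \<in> ?A" using M by auto
  moreover have "?\<tau> ?M = T" by (simp add: rtts_tau_def)
  ultimately have "0 \<le> Max ?A"
    using \<tau>(2)[of "?M - 1"] by (intro Max_ge_iff[THEN iffD2]) force+
  moreover have "?\<tau> j - ?\<tau> (j - 1) \<le> T" for j
    using \<tau>(1)[of "j - 1"] \<tau>(2)[of j] by linarith
  then have "Max ?A \<le> T"
    using M by (intro Max_le_iff[THEN iffD2]) auto
  ultimately show "0 \<le> rtts_max_spacing Nbar T f" "rtts_max_spacing Nbar T f \<le> T"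
    by (simp_all add: rtts_max_spacing_def)
qed

lemma grid_cell_between:
  fixes a b h :: real
  assumes "0 \<le> a" "h > 0" "a + 2 * h < b"
  obtains k :: nat where "a < real k * h" "real (Suc k) * h < b"
proof
  define k where "k = Suc (nat \<lfloor>a / h\<rfloor>)"
  have k: "real k = of_int \<lfloor>a / h\<rfloor> + 1" using assms(1,2) by (simp add: k_def)
  have "a / h < real k" "real k \<le> a / h + 1" unfolding k by linarith+
  then show "a < real k * h" "real (Suc k) * h < b"
    using assms(2,3) by (simp_all add: field_simps)
qed

lemma rtts_max_spacing_gt_imp_grid_increment_le:
  assumes "Nbar \<ge> 1" "T \<ge> 0" "mono_on {0..T} f" "h > 0" "2 * h < rtts_max_spacing Nbar T f"
  obtains k :: nat where "real (Suc k) * h \<le> T" "f (real (Suc k) * h) - f (real k * h) \<le> Nbar"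
proof -
  let ?\<tau> = "rtts_tau Nbar T f"
  have "2 * h < Max ((\<lambda>j. ?\<tau> j - ?\<tau> (j - 1)) ` {1..rtts_count Nbar T f})"
    using assms(5) by (simp add: rtts_max_spacing_def)
  then obtain j where j: "1 \<le> j" "j \<le> rtts_count Nbar T f" "?\<tau> (j - 1) + 2 * h < ?\<tau> j"
    by (subst (asm) Max_gr_iff) (force simp: rtts_count_def)+
  obtain k :: nat where k: "?\<tau> (j - 1) < real k * h" "real (Suc k) * h < ?\<tau> j"
    using grid_cell_between[OF rtts_tau_bounds(1)[OF assms(2)] assms(4) j(3)] .
  show ?thesis
  proof
    show "real (Suc k) * h \<le> T" using k(2) rtts_tau_bounds(2)[OF assms(2), of Nbar f j] by linarith
    show "f (real (Suc k) * h) - f (real k * h) \<le> Nbar"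
      using rtts_increment_le[OF assms(1,2) j(1,2) assms(3) k(1) _ k(2)] assms(4) by simp
  qed
qed

section \<open>Measurability of the sampling times\<close>

lemma first_passage_le_iff:
  fixes f :: "real \<Rightarrow> nat"
  assumes mono: "mono_on {0..T} f"
    and right_cont: "\<forall>t\<in>{0..<T}. continuous (at_right t) (\<lambda>s. real (f s))"
    and "m \<le> f T" "0 \<le> a" "a \<le> T"
  shows "Inf {t \<in> {0..T}. m \<le> f t} \<le> a \<longleftrightarrow> m \<le> f a"
proof
  let ?S = "{t \<in> {0..T}. m \<le> f t}"
  have bdd: "bdd_below ?S" by (rule bdd_belowI[of _ 0]) auto
  have "T \<in> ?S" using assms(3-5) by auto
  then have S: "?S \<noteq> {}" by blast
  show "m \<le> f a \<Longrightarrow> Inf ?S \<le> a"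
    using assms(4,5) by (intro cInf_lower bdd) auto
  assume Inf_le: "Inf ?S \<le> a"
  show "m \<le> f a"
  proof (rule ccontr)
    assume less: "\<not> m \<le> f a"
    then have "a \<noteq> T" using assms(3) by auto
    then have "a < T" using assms(5) by simp
    then have "((\<lambda>s. real (f s)) \<longlongrightarrow> real (f a)) (at_right a)"
      using right_cont assms(4) by (simp add: continuous_within)
    then have "eventually (\<lambda>s. real (f s) < real (f a) + 1) (at_right a)"
      by (rule order_tendstoD) simp
    \<comment> \<open>an integer-valued right-continuous path stays constant just after \<open>a\<close>\<close>
    then obtain b where b: "b > a" "\<And>s. a < s \<Longrightarrow> s < b \<Longrightarrow> f s \<le> f a"
      unfolding eventually_at_right_field by force
    have "min b T \<le> Inf ?S"
    proof (rule cInf_greatest[OF S])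
      fix t assume t: "t \<in> ?S"
      have "f t \<le> f a" if "t \<le> a"
        using mono_onD[OF mono, of t a] that t assms(4,5) by auto
      then have "a < t" using t less by force
      then show "min b T \<le> t" using b(2)[of t] t less by force
    qed
    then show False using Inf_le b(1) \<open>a < T\<close> by linarith
  qed
qed

lemma borel_measurable_first_passage:
  fixes N :: "real \<Rightarrow> 'a \<Rightarrow> nat"
  assumes "T \<ge> 0"
    and meas: "\<And>t. t \<in> {0..T} \<Longrightarrow> N t \<in> measurable P (count_space UNIV)"
    and mono: "\<And>\<omega>. \<omega> \<in> space P \<Longrightarrow> mono_on {0..T} (\<lambda>t. N t \<omega>)"
    and right_cont: "\<And>\<omega>. \<omega> \<in> space P \<Longrightarrow>
      \<forall>t\<in>{0..<T}. continuous (at_right t) (\<lambda>s. real (N s \<omega>))"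
  shows "(\<lambda>\<omega>. Inf {t \<in> {0..T}. m \<le> N t \<omega>}) \<in> borel_measurable P"
  unfolding borel_measurable_iff_le
proof
  fix a :: real
  define a' where "a' = max 0 (min a T)"
  have [measurable]: "N T \<in> measurable P (count_space UNIV)" "N a' \<in> measurable P (count_space UNIV)"
    using meas assms(1) by (auto simp: a'_def)
  have "Inf {t \<in> {0..T}. m \<le> N t \<omega>} \<le> a \<longleftrightarrow>
      (if m \<le> N T \<omega> then 0 \<le> a \<and> m \<le> N a' \<omega> else Inf ({} :: real set) \<le> a)"
    if \<omega>: "\<omega> \<in> space P" for \<omega>
  proof (cases "m \<le> N T \<omega>")
    case True
    let ?S = "{t \<in> {0..T}. m \<le> N t \<omega>}"
    have "T \<in> ?S" using True assms(1) by auto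
    then have "0 \<le> Inf ?S" "Inf ?S \<le> T"
      by (auto intro!: cInf_greatest cInf_lower bdd_belowI[of _ 0])
    moreover have "Inf ?S \<le> a' \<longleftrightarrow> m \<le> N a' \<omega>"
      using first_passage_le_iff[OF mono[OF \<omega>] right_cont[OF \<omega>] True] assms(1)
      by (simp add: a'_def)
    ultimately show ?thesis using True by (auto simp: a'_def)
  next
    case False
    have "N t \<omega> \<le> N T \<omega>" if "t \<in> {0..T}" for t
      using mono_onD[OF mono[OF \<omega>], of t T] that by auto
    then have "{t \<in> {0..T}. m \<le> N t \<omega>} = {}" using False by force
    then show ?thesis by (simp only: if_not_P[OF False])
  qed
  then have "{\<omega> \<in> space P. Inf {t \<in> {0..T}. m \<le> N t \<omega>} \<le> a} =
      {\<omega> \<in> space P. if m \<le> N T \<omega> then 0 \<le> a \<and> m \<le> N a' \<omega> else Inf ({} :: real set) \<le> a}"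
    by blast
  also have "\<dots> \<in> sets P" by measurable
  finally show "{\<omega> \<in> space P. Inf {t \<in> {0..T}. m \<le> N t \<omega>} \<le> a} \<in> sets P" .
qed

lemma borel_measurable_rtts_max_spacing:
  fixes N :: "real \<Rightarrow> 'a \<Rightarrow> nat"
  assumes "T \<ge> 0"
    and meas: "\<And>t. t \<in> {0..T} \<Longrightarrow> N t \<in> measurable P (count_space UNIV)"
    and mono: "\<And>\<omega>. \<omega> \<in> space P \<Longrightarrow> mono_on {0..T} (\<lambda>t. N t \<omega>)"
    and right_cont: "\<And>\<omega>. \<omega> \<in> space P \<Longrightarrow>
      \<forall>t\<in>{0..<T}. continuous (at_right t) (\<lambda>s. real (N s \<omega>))"
  shows "(\<lambda>\<omega>. rtts_max_spacing Nbar T (\<lambda>t. N t \<omega>)) \<in> borel_measurable P"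
proof -
  \<comment> \<open>the sampling times with the (random) number of intervals frozen to \<open>n\<close>\<close>
  define \<tau> where "\<tau> n j \<omega> = (if n \<le> j then T else Inf {t \<in> {0..T}. j * Nbar \<le> N t \<omega>})"
    for n j :: nat and \<omega>
  define count where "count \<omega> = rtts_count Nbar T (\<lambda>t. N t \<omega>)" for \<omega>
  have "(\<lambda>\<omega>. \<tau> n j \<omega>) \<in> borel_measurable P" for n j
    unfolding \<tau>_def using borel_measurable_first_passage[OF assms] by (cases "n \<le> j") simp_all
  then have Max: "(\<lambda>\<omega>. Max ((\<lambda>j. \<tau> n j \<omega> - \<tau> n (j - 1) \<omega>) ` {1..n})) \<in> borel_measurable P"
    for n
    by measurable
  have [measurable]: "N T \<in> measurable P (count_space UNIV)"
    using meas assms(1) by simp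
  then have "count \<in> measurable P (count_space UNIV)"
    unfolding count_def rtts_count_def by measurable
  from measurable_compose_countable'[OF Max this]
  show ?thesis by (simp add: rtts_max_spacing_def rtts_tau_def \<tau>_def count_def)
qed

section \<open>Tail and moment bounds for the maximal spacing\<close>

lemma power_div_fact_le_exp:
  fixes x :: real
  assumes "0 \<le> x"
  shows "x ^ n / fact n \<le> exp x"
proof -
  have sums: "(\<lambda>k. x ^ k / fact k) sums exp x"
    using exp_converges[of x] by (simp add: divide_inverse_commute scaleR_conv_of_real)
  have "(\<Sum>k\<in>{n}. x ^ k / fact k) \<le> (\<Sum>k. x ^ k / fact k)"
    using sums assms by (intro sum_le_suminf) (auto simp: sums_iff)
  then show ?thesis using sums by (simp add: sums_iff)
qed

lemma exp_neg_mult_power_div_fact_le: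
  fixes \<mu> :: real
  assumes "0 \<le> \<mu>"
  shows "exp (- \<mu>) * \<mu> ^ i / fact i \<le> 2 ^ i * exp (- \<mu> / 2)"
proof -
  have "(\<mu> / 2) ^ i / fact i \<le> exp (\<mu> / 2)"
    using power_div_fact_le_exp assms by simp
  then have "exp (- \<mu>) * (\<mu> ^ i / fact i) \<le> exp (- \<mu>) * (2 ^ i * exp (\<mu> / 2))"
    by (intro mult_left_mono) (auto simp: power_divide field_simps)
  also have "\<dots> = 2 ^ i * exp (- \<mu> / 2)"
    by (simp flip: exp_add)
  finally show ?thesis by simp
qed

lemma prob_poisson_increment_le:
  assumes nh: "nh_poisson_process P T lamT N" and "0 \<le> s" "s \<le> t" "t \<le> T" "c \<ge> 0"
    and lower: "\<forall>r\<in>{0..T}. c \<le> lamT r" and int: "lamT integrable_on {0..T}"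
  shows "measure P {\<omega> \<in> space P. N t \<omega> - N s \<omega> = i} \<le> 2 ^ i * exp (- (c * (t - s)) / 2)"
proof -
  define \<mu> where "\<mu> = integral {s..t} lamT"
  have "lamT integrable_on {s..t}"
    by (rule integrable_on_subinterval[OF int]) (use assms(2,4) in auto)
  then have "integral {s..t} (\<lambda>_. c) \<le> \<mu>"
    unfolding \<mu>_def using lower assms(2-4) by (intro integral_le) auto
  then have \<mu>: "c * (t - s) \<le> \<mu>" using \<open>s \<le> t\<close> by (simp add: algebra_simps)
  have "measure P {\<omega> \<in> space P. N t \<omega> - N s \<omega> = i} = exp (- \<mu>) * \<mu> ^ i / fact i"
    using nh assms(2-4) unfolding nh_poisson_process_def \<mu>_def by blast
  also have "\<dots> \<le> 2 ^ i * exp (- \<mu> / 2)"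
    using \<mu> assms(3,5) by (intro exp_neg_mult_power_div_fact_le) (simp add: order_trans[OF _ \<mu>])
  also have "\<dots> \<le> 2 ^ i * exp (- (c * (t - s)) / 2)"
    using \<mu> by simp
  finally show ?thesis .
qed

lemma grid_cells_eq_lessThan:
  fixes h T :: real
  assumes "h > 0" "T \<ge> 0"
  shows "{k. real (Suc k) * h \<le> T} = {..<nat \<lfloor>T / h\<rfloor>}"
proof -
  have "Suc k \<le> nat \<lfloor>T / h\<rfloor> \<longleftrightarrow> real (Suc k) \<le> T / h" for k
  proof
    assume "Suc k \<le> nat \<lfloor>T / h\<rfloor>"
    then have "real (Suc k) \<le> real (nat \<lfloor>T / h\<rfloor>)" by (simp only: of_nat_le_iff)
    also have "\<dots> \<le> T / h" using assms by (intro of_nat_floor) simp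
    finally show "real (Suc k) \<le> T / h" .
  qed (rule le_nat_floor)
  then have "k < nat \<lfloor>T / h\<rfloor> \<longleftrightarrow> real (Suc k) * h \<le> T" for k
    using assms(1) by (simp only: less_eq_Suc_le pos_le_divide_eq)
  then show ?thesis by blast
qed

lemma prob_rtts_max_spacing_gt_le:
  assumes nh: "nh_poisson_process P T lamT N" and "T > 0" "c \<ge> 0"
    and "\<forall>t\<in>{0..T}. c \<le> lamT t" "lamT integrable_on {0..T}"
    and "Nbar \<ge> 1" "h > 0"
  shows "measure P {\<omega> \<in> space P. 2 * h < rtts_max_spacing Nbar T (\<lambda>t. N t \<omega>)}
      \<le> T / h * (real (Suc Nbar) * 2 ^ Nbar * exp (- (c * h) / 2))"
proof -
  have meas: "\<And>t. t \<in> {0..T} \<Longrightarrow> N t \<in> measurable P (count_space UNIV)"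
    and mono: "\<And>\<omega>. \<omega> \<in> space P \<Longrightarrow> mono_on {0..T} (\<lambda>t. N t \<omega>)"
    using nh unfolding nh_poisson_process_def by blast+
  interpret prob_space P using nh by (simp add: nh_poisson_process_def)
  define B where "B = 2 ^ Nbar * exp (- (c * h) / 2)"
  define I where "I = {k. real (Suc k) * h \<le> T}"
  define F where "F k i = {\<omega> \<in> space P. N (real (Suc k) * h) \<omega> - N (real k * h) \<omega> = i}" for k i
  have I: "I = {..<nat \<lfloor>T / h\<rfloor>}"
    unfolding I_def using \<open>h > 0\<close> \<open>T > 0\<close> by (intro grid_cells_eq_lessThan) auto
  have cell: "0 \<le> real k * h" "real k * h \<le> real (Suc k) * h" "real (Suc k) * h \<le> T"
    if "k \<in> I" for k
    using that \<open>h > 0\<close> by (auto simp: I_def)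
  have F_sets: "F k i \<in> events" if "k \<in> I" for k i
  proof -
    have [measurable]: "N (real k * h) \<in> measurable P (count_space UNIV)"
      "N (real (Suc k) * h) \<in> measurable P (count_space UNIV)"
      using meas cell[OF that] by auto
    show ?thesis unfolding F_def by measurable
  qed
  have F_prob: "prob (F k i) \<le> B" if "k \<in> I" "i \<le> Nbar" for k i
  proof -
    have "prob (F k i) \<le> 2 ^ i * exp (- (c * (real (Suc k) * h - real k * h)) / 2)"
      unfolding F_def using cell[OF that(1)] assms by (intro prob_poisson_increment_le) auto
    also have "\<dots> = 2 ^ i * exp (- (c * h) / 2)"
      by (simp add: algebra_simps)
    also have "\<dots> \<le> B"
      unfolding B_def using that(2) by (intro mult_right_mono power_increasing) auto
    finally show ?thesis .
  qed
  have "{\<omega> \<in> space P. 2 * h < rtts_max_spacing Nbar T (\<lambda>t. N t \<omega>)} \<subseteq> (\<Union>k\<in>I. \<Union>i\<le>Nbar. F k i)"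
  proof safe
    fix \<omega> assume \<omega>: "\<omega> \<in> space P" "2 * h < rtts_max_spacing Nbar T (\<lambda>t. N t \<omega>)"
    obtain k where "real (Suc k) * h \<le> T" "N (real (Suc k) * h) \<omega> - N (real k * h) \<omega> \<le> Nbar"
      using rtts_max_spacing_gt_imp_grid_increment_le[OF \<open>Nbar \<ge> 1\<close> _ mono[OF \<omega>(1)] \<open>h > 0\<close> \<omega>(2)]
        \<open>T > 0\<close> by auto
    then show "\<omega> \<in> (\<Union>k\<in>I. \<Union>i\<le>Nbar. F k i)" using \<omega>(1) by (auto simp: I_def F_def)
  qed
  then have "measure P {\<omega> \<in> space P. 2 * h < rtts_max_spacing Nbar T (\<lambda>t. N t \<omega>)}
      \<le> prob (\<Union>k\<in>I. \<Union>i\<le>Nbar. F k i)"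
    using F_sets by (intro finite_measure_mono) auto
  also have "\<dots> \<le> (\<Sum>k\<in>I. \<Sum>i\<le>Nbar. prob (F k i))"
    using F_sets by (intro order_trans[OF measure_UNION_le] sum_mono measure_UNION_le) (auto simp: I)
  also have "\<dots> \<le> (\<Sum>k\<in>I. \<Sum>i\<le>Nbar. B)"
    by (intro sum_mono F_prob) auto
  also have "\<dots> = real (nat \<lfloor>T / h\<rfloor>) * (Suc Nbar * B)"
    by (simp add: I)
  also have "\<dots> \<le> T / h * (Suc Nbar * B)"
    using \<open>T > 0\<close> \<open>h > 0\<close> by (intro mult_right_mono of_nat_floor) (auto simp: B_def)
  finally show ?thesis by (simp only: B_def mult.assoc)
qed

lemma (in prob_space) integral_powr_le_tail:
  fixes X :: "'a \<Rightarrow> real"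
  assumes [measurable]: "X \<in> borel_measurable M"
    and "\<And>\<omega>. 0 \<le> X \<omega>" "\<And>\<omega>. X \<omega> \<le> b" "0 \<le> a" "z > 0"
  shows "integrable M (\<lambda>\<omega>. X \<omega> powr z)"
    and "(\<integral>\<omega>. X \<omega> powr z \<partial>M) \<le> a powr z + b powr z * prob {\<omega> \<in> space M. a < X \<omega>}"
proof -
  define E where "E = {\<omega> \<in> space M. a < X \<omega>}"
  have [measurable]: "E \<in> events" unfolding E_def by measurable
  have le_b: "X \<omega> powr z \<le> b powr z" for \<omega>
    using assms(2,3,5) by (intro powr_mono2) auto
  show int: "integrable M (\<lambda>\<omega>. X \<omega> powr z)"
    using le_b by (intro integrable_const_bound[where B = "b powr z"]) auto
  have "X \<omega> powr z \<le> a powr z + b powr z * indicator E \<omega>" if "\<omega> \<in> space M" for \<omega>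
  proof (cases "\<omega> \<in> E")
    case True
    then show ?thesis using le_b[of \<omega>] by (simp add: add_increasing)
  next
    case False
    then have "X \<omega> powr z \<le> a powr z" using that assms(2,5) by (intro powr_mono2) (auto simp: E_def)
    then show ?thesis using False by simp
  qed
  moreover have ind: "integrable M (indicator E :: 'a \<Rightarrow> real)"
    by (intro integrable_real_indicator) (auto simp: less_top[symmetric])
  ultimately have "(\<integral>\<omega>. X \<omega> powr z \<partial>M) \<le> (\<integral>\<omega>. a powr z + b powr z * indicator E \<omega> \<partial>M)"
    using int by (intro integral_mono) auto
  also have "\<dots> = a powr z + b powr z * prob E"
    using ind by (simp add: Bochner_Integration.integral_add prob_space)
  finally show "(\<integral>\<omega>. X \<omega> powr z \<partial>M) \<le> a powr z + b powr z * prob {\<omega> \<in> space M. a < X \<omega>}"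
    by (simp add: E_def)
qed

lemma rtts_max_spacing_powr_integral_le:
  assumes nh: "nh_poisson_process P T lamT N" and "T > 0" "c \<ge> 0"
    and "\<forall>t\<in>{0..T}. c \<le> lamT t" "lamT integrable_on {0..T}"
    and "Nbar \<ge> 1" "h > 0" "z > 0"
  shows "integrable P (\<lambda>\<omega>. rtts_max_spacing Nbar T (\<lambda>t. N t \<omega>) powr z)"
    and "(\<integral>\<omega>. rtts_max_spacing Nbar T (\<lambda>t. N t \<omega>) powr z \<partial>P)
      \<le> (2 * h) powr z + T powr z * (T / h * (real (Suc Nbar) * 2 ^ Nbar * exp (- (c * h) / 2)))"
proof -
  interpret prob_space P using nh by (simp add: nh_poisson_process_def)
  let ?X = "\<lambda>\<omega>. rtts_max_spacing Nbar T (\<lambda>t. N t \<omega>)"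
  have meas: "?X \<in> borel_measurable P"
    using nh \<open>T > 0\<close> unfolding nh_poisson_process_def
    by (intro borel_measurable_rtts_max_spacing) auto
  have "0 \<le> ?X \<omega>" "?X \<omega> \<le> T" for \<omega>
    using rtts_max_spacing_bounds \<open>T > 0\<close> by simp_all
  note tail = integral_powr_le_tail[OF meas this, of "2 * h", OF _ \<open>z > 0\<close>]
  show "integrable P (\<lambda>\<omega>. ?X \<omega> powr z)" using tail(1) \<open>h > 0\<close> by simp
  have "(\<integral>\<omega>. ?X \<omega> powr z \<partial>P) \<le> (2 * h) powr z + T powr z * prob {\<omega> \<in> space P. 2 * h < ?X \<omega>}"
    using tail(2) \<open>h > 0\<close> by simp
  also have "\<dots> \<le> (2 * h) powr z + T powr z * (T / h * (real (Suc Nbar) * 2 ^ Nbar * exp (- (c * h) / 2)))"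
    using prob_rtts_max_spacing_gt_le[OF assms(1-7)] by (intro add_left_mono mult_left_mono) auto
  finally show "(\<integral>\<omega>. ?X \<omega> powr z \<partial>P)
      \<le> (2 * h) powr z + T powr z * (T / h * (real (Suc Nbar) * 2 ^ Nbar * exp (- (c * h) / 2)))" .
qed

lemma unif_integrable_on_if_integral_tendsto_0:
  fixes X :: "nat \<Rightarrow> 'a \<Rightarrow> real"
  assumes int: "\<And>n. n \<in> I \<Longrightarrow> integrable (M n) (X n)"
    and bounds: "\<And>n \<omega>. n \<in> I \<Longrightarrow> \<omega> \<in> space (M n) \<Longrightarrow> 0 \<le> X n \<omega> \<and> X n \<omega> \<le> b n"
    and lim: "(\<lambda>n. integral\<^sup>L (M n) (X n)) \<longlonglongrightarrow> 0"
  shows "unif_integrable_on I M X"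
  unfolding unif_integrable_on_def
proof (intro conjI ballI allI impI)
  fix n assume "n \<in> I"
  then show "integrable (M n) (X n)" by (rule int)
next
  fix \<epsilon> :: real assume "\<epsilon> > 0"
  then obtain n0 where n0: "\<And>n. n \<ge> n0 \<Longrightarrow> integral\<^sup>L (M n) (X n) < \<epsilon>"
    using order_tendstoD(2)[OF lim] unfolding eventually_sequentially by blast
  \<comment> \<open>the finitely many variables before \<open>n0\<close> are uniformly bounded\<close>
  define K where "K = Max (b ` {..<n0})"
  show "\<exists>K. \<forall>n\<in>I. (\<integral>\<omega>. \<bar>X n \<omega>\<bar> * indicator {\<omega>. K < \<bar>X n \<omega>\<bar>} \<omega> \<partial>M n) \<le> \<epsilon>"
  proof (intro exI ballI)
    fix n assume n: "n \<in> I"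
    show "(\<integral>\<omega>. \<bar>X n \<omega>\<bar> * indicator {\<omega>. K < \<bar>X n \<omega>\<bar>} \<omega> \<partial>M n) \<le> \<epsilon>"
    proof (cases "n < n0")
      case True
      then have "b n \<le> K" unfolding K_def by (intro Max_ge) auto
      then have zero: "\<bar>X n \<omega>\<bar> * indicator {\<omega>. K < \<bar>X n \<omega>\<bar>} \<omega> = 0"
        if "\<omega> \<in> space (M n)" for \<omega>
        using bounds[OF n that] by (simp add: indicator_def)
      have "(\<integral>\<omega>. \<bar>X n \<omega>\<bar> * indicator {\<omega>. K < \<bar>X n \<omega>\<bar>} \<omega> \<partial>M n) = (\<integral>\<omega>. 0 \<partial>M n)"
        by (rule Bochner_Integration.integral_cong) (simp_all add: zero)
      then show ?thesis using \<open>\<epsilon> > 0\<close> by simp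
    next
      case False
      have "(\<integral>\<omega>. \<bar>X n \<omega>\<bar> * indicator {\<omega>. K < \<bar>X n \<omega>\<bar>} \<omega> \<partial>M n) \<le> integral\<^sup>L (M n) (X n)"
        using bounds[OF n] by (intro integral_mono' int[OF n]) (auto simp: indicator_def)
      also have "\<dots> < \<epsilon>" using n0 False by simp
      finally show ?thesis by simp
    qed
  qed
qed

lemma holder_cont_01_imp_continuous_on:
  assumes "holder_cont_01 f \<beta>" "\<beta> > 0"
  shows "continuous_on {0..1} f"
proof -
  obtain C where C: "\<forall>t \<delta>. 0 \<le> t \<and> 0 \<le> \<delta> \<and> t + \<delta> \<le> 1 \<longrightarrow> \<bar>f (t + \<delta>) - f t\<bar> \<le> C * \<delta> powr \<beta>"
    using assms(1) unfolding holder_cont_01_def by blast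
  have bound: "\<bar>f y - f x\<bar> \<le> C * \<bar>y - x\<bar> powr \<beta>" if "x \<in> {0..1}" "y \<in> {0..1}" for x y
  proof (cases "x \<le> y")
    case True
    then show ?thesis using C[rule_format, of x "y - x"] that by simp
  next
    case False
    then show ?thesis using C[rule_format, of y "x - y"] that by (simp add: abs_minus_commute)
  qed
  show ?thesis
    unfolding continuous_on_def
  proof
    fix x :: real assume x: "x \<in> {0..1}"
    have "((\<lambda>y. \<bar>y - x\<bar>) \<longlongrightarrow> \<bar>x - x\<bar>) (at x within {0..1})"
      by (intro tendsto_intros)
    then have "((\<lambda>y. \<bar>y - x\<bar>) \<longlongrightarrow> 0) (at x within {0..1})"
      by (simp only: diff_self abs_zero)
    then have "((\<lambda>y. \<bar>y - x\<bar> powr \<beta>) \<longlongrightarrow> 0) (at x within {0..1})"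
      using assms(2) by (intro tendsto_zero_powrI) auto
    then have "((\<lambda>y. C * \<bar>y - x\<bar> powr \<beta>) \<longlongrightarrow> 0) (at x within {0..1})"
      by (rule tendsto_mult_right_zero)
    moreover have "eventually (\<lambda>y. norm (f y - f x) \<le> C * \<bar>y - x\<bar> powr \<beta>) (at x within {0..1})"
      unfolding eventually_at_filter using bound x by (intro always_eventually) auto
    ultimately have "((\<lambda>y. f y - f x) \<longlongrightarrow> 0) (at x within {0..1})"
      by (rule Lim_null_comparison[rotated])
    then show "(f \<longlongrightarrow> f x) (at x within {0..1})"
      by (simp add: LIM_zero_iff)
  qed
qed

lemma continuous_on_compact_pos_imp_lower_bound:
  fixes f :: "'a::topological_space \<Rightarrow> real"
  assumes "compact S" "continuous_on S f" "\<forall>x\<in>S. f x > 0"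
  obtains c where "c > 0" "\<forall>x\<in>S. c \<le> f x"
proof (cases "S = {}")
  case False
  then obtain x0 where "x0 \<in> S" "\<forall>x\<in>S. f x0 \<le> f x"
    using continuous_attains_inf[OF assms(1) _ assms(2)] by auto
  then show ?thesis using assms(3) that by blast
qed (use that[of 1] in auto)

lemma rescaled_intensity_bounds:
  fixes lam :: "real \<Rightarrow> real"
  assumes "continuous_on {0..1} lam" "\<forall>u\<in>{0..1}. c \<le> lam u" "T > 0"
  shows "\<forall>t\<in>{0..T}. c \<le> lam (t / T)" "(\<lambda>t. lam (t / T)) integrable_on {0..T}"
proof -
  show "\<forall>t\<in>{0..T}. c \<le> lam (t / T)" using assms(2,3) by auto
  show "(\<lambda>t. lam (t / T)) integrable_on {0..T}"
    by (intro integrable_continuous_interval continuous_on_compose2[OF assms(1)])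
      (use assms(3) in \<open>auto intro!: continuous_intros\<close>)
qed

theorem lemmaD3:
  fixes M :: "nat \<Rightarrow> 'a measure"
    and N :: "nat \<Rightarrow> real \<Rightarrow> 'a \<Rightarrow> nat"
    and lam :: "real \<Rightarrow> real"
    and \<beta> \<zeta> \<eta> :: real
    and Nbar :: nat
  assumes lam_pos: "\<forall>u\<in>{0..1}. lam u > 0"
    and beta_pos: "\<beta> > 0"
    and lam_holder: "holder_cont_01 lam \<beta>"
    and poisson: "\<forall>T\<ge>1. nh_poisson_process (M T) (real T) (\<lambda>t. lam (t / real T)) (N T)"
    and Nbar: "Nbar \<ge> 1"
    and zeta: "\<zeta> > 0"
    and eta: "\<eta> > 0"
  shows "((\<lambda>T. \<integral>\<omega>. rtts_max_spacing Nbar (real T) (\<lambda>t. N T t \<omega>) powr \<zeta> / real T powr \<eta> \<partial>M T)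
           \<longlonglongrightarrow> 0) \<and>
         unif_integrable_on {1..} M
           (\<lambda>T \<omega>. rtts_max_spacing Nbar (real T) (\<lambda>t. N T t \<omega>) powr \<zeta> / real T powr \<eta>)"
proof -
  have cont: "continuous_on {0..1} lam"
    using lam_holder beta_pos by (rule holder_cont_01_imp_continuous_on)
  obtain c where c: "c > 0" "\<forall>u\<in>{0..1}. c \<le> lam u"
    using continuous_on_compact_pos_imp_lower_bound[OF compact_Icc cont lam_pos] .
  \<comment> \<open>the grid width balancing the two terms of the bound\<close>
  define h where "h T = real T powr (\<eta> / (2 * \<zeta>))" for T :: nat
  define B where "B T = ((2 * h T) powr \<zeta> + real T powr \<zeta> *
      (real T / h T * (real (Suc Nbar) * 2 ^ Nbar * exp (- (c * h T) / 2)))) / real T powr \<eta>" for T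
  define X where "X T \<omega> = rtts_max_spacing Nbar (real T) (\<lambda>t. N T t \<omega>) powr \<zeta> / real T powr \<eta>" for T \<omega>
  have X: "integrable (M T) (X T) \<and> integral\<^sup>L (M T) (X T) \<le> B T" if "T \<ge> 1" for T
    using rtts_max_spacing_powr_integral_le[OF poisson[rule_format, OF that] _ _
        rescaled_intensity_bounds[OF cont c(2)] Nbar _ zeta, of "h T"] that c(1)
    unfolding X_def B_def h_def by (auto intro!: divide_right_mono)
  have X_bounds: "0 \<le> X T \<omega> \<and> X T \<omega> \<le> real T powr \<zeta> / real T powr \<eta>" for T \<omega>
    using rtts_max_spacing_bounds[of "real T" Nbar "\<lambda>t. N T t \<omega>"] zeta
    unfolding X_def by (auto intro!: divide_right_mono powr_mono2)
  have "B \<longlonglongrightarrow> 0"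
    unfolding B_def h_def using zeta eta c(1) by real_asymp
  then have lim: "(\<lambda>T. integral\<^sup>L (M T) (X T)) \<longlonglongrightarrow> 0"
  proof (rule tendsto_sandwich[of "\<lambda>_. 0", rotated 3])
    show "\<forall>\<^sub>F T in sequentially. 0 \<le> integral\<^sup>L (M T) (X T)"
      using X_bounds by (simp add: integral_nonneg)
    show "\<forall>\<^sub>F T in sequentially. integral\<^sup>L (M T) (X T) \<le> B T"
      using eventually_ge_at_top[of "1::nat"] by eventually_elim (use X in blast)
  qed simp
  moreover have "unif_integrable_on {1..} M X"
    using X X_bounds lim by (intro unif_integrable_on_if_integral_tendsto_0) auto
  ultimately show ?thesis unfolding X_def by simp
qed

end
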